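(* Let $\mathsf{s} > \mathsf{r} \ge 1$ be integers. Let $\mathbf{Z}$ be a random $\mathsf{s}\times\mathsf{r}$ matrix over $\mathbb{F}_2$, uniformly distributed over the set of all $\mathsf{s}\times\mathsf{r}$ binary matrices of (column) rank $\mathsf{r}$, and let $\mathbf{U}$ be a random $\mathsf{r}\times\mathsf{s}$ matrix over $\mathbb{F}_2$, independent of $\mathbf{Z}$ and uniformly distributed over the set of all $\mathsf{r}\times\mathsf{s}$ binary matrices of (row) rank $\mathsf{r}$. Let $\mathbf{M}=\mathbf{Z}\mathbf{U}$ (the mask). Fix a set $I$ of $\mathsf{r}$ row indices and a set $J$ of $\mathsf{r}$ column indices of $\mathbf{M}$, and let $\mathbf{M}_{I,J}$ denote the $\mathsf{r}\times\mathsf{r}$ submatrix of $\mathbf{M}$ at the intersections of these rows and columns. Then, conditioned on $\mathbf{M}_{I,J}$ being invertible (i.e., its rows and its columns each spanning $\mathbb{F}_2^{\mathsf{r}}$), $\mathbf{M}_{I,J}$ is uniformly distributed over the set of all invertible $\mathsf{r}\times\mathsf{r}$ binary matrices.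
   Context: All arithmetic is over the binary field $\mathbb{F}_2$. The matrix $\mathbf{M}=\mathbf{Z}\mathbf{U}$ is called a masking matrix. *)

theory Defs
  imports "Jordan_Normal_Form.DL_Rank_Submatrix" "HOL-Library.Z2"
    "HOL-Probability.Probability_Mass_Function"
begin

text \<open>Column rank of an n-row matrix is \<open>vec_space.rank n\<close>; row rank of a matrix is
  the column rank of its transpose.\<close>

definition full_col_rank_mats :: "nat \<Rightarrow> nat \<Rightarrow> bit mat set" where
  "full_col_rank_mats s r = {Z \<in> carrier_mat s r. vec_space.rank s Z = r}"

definition full_row_rank_mats :: "nat \<Rightarrow> nat \<Rightarrow> bit mat set" where
  "full_row_rank_mats r s = {U \<in> carrier_mat r s. vec_space.rank s (transpose_mat U) = r}"

definition invertible_mats :: "nat \<Rightarrow> bit mat set" where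
  "invertible_mats r = {A \<in> carrier_mat r r. invertible_mat A}"

text \<open>Joint law of (Z, U): independent, each uniform over its set, i.e. uniform on the product.\<close>
definition ZU_pmf :: "nat \<Rightarrow> nat \<Rightarrow> (bit mat \<times> bit mat) pmf" where
  "ZU_pmf s r = pmf_of_set (full_col_rank_mats s r \<times> full_row_rank_mats r s)"

end

theory Submission
  imports Defs
begin

text \<open>
  Write \<open>Z\<^sub>I\<close> for the rows of \<open>Z\<close> indexed by \<open>I\<close> and \<open>U\<^sub>J\<close> for the columns of \<open>U\<close>
  indexed by \<open>J\<close>, so that the observed block of the mask is \<open>M\<^sub>I\<^sub>J = Z\<^sub>I U\<^sub>J\<close>.
  Right multiplication by an invertible \<open>r \<times> r\<close> matrix \<open>G\<close> preserves full column rank and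
  maps \<open>{Z. Z\<^sub>I = X}\<close> bijectively onto \<open>{Z. Z\<^sub>I = X G}\<close>, so all these fibres over
  invertible \<open>X\<close> have the same size \<open>k\<close>. For fixed \<open>U\<close> and invertible \<open>A\<close>, the equation
  \<open>Z\<^sub>I U\<^sub>J = A\<close> forces \<open>U\<^sub>J\<close> to be invertible and then reads \<open>Z\<^sub>I = A U\<^sub>J\<^sup>-\<^sup>1\<close>, which
  has exactly \<open>k\<close> solutions. Hence every invertible \<open>A\<close> is hit by the same number of pairs
  \<open>(Z, U)\<close>, namely \<open>k\<close> times the number of \<open>U\<close> with \<open>U\<^sub>J\<close> invertible; the matrices
  selecting the coordinates in \<open>I\<close> and \<open>J\<close> show that this number is positive. Since the
  pair is uniform, the conditional law of \<open>M\<^sub>I\<^sub>J\<close> given invertibility is uniform.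
\<close>

lemma pmf_of_set_conditional_uniform:
  fixes f :: "'a \<Rightarrow> 'b" and P :: "'b \<Rightarrow> bool"
  assumes S: "finite S" and B: "finite B" "B \<noteq> {}"
    and P: "\<And>x. x \<in> S \<Longrightarrow> P (f x) \<longleftrightarrow> f x \<in> B"
    and fibres: "\<And>b. b \<in> B \<Longrightarrow> card {x \<in> S. f x = b} = c" and c: "c > 0"
  shows "measure_pmf.prob (pmf_of_set S) {x. P (f x)} > 0
    \<and> (\<forall>b\<in>B. measure_pmf.prob (pmf_of_set S) {x. f x = b \<and> P (f x)}
               / measure_pmf.prob (pmf_of_set S) {x. P (f x)} = 1 / card B)"
proof -
  obtain b0 where "b0 \<in> B"
    using B(2) by blast
  then have "card {x \<in> S. f x = b0} \<noteq> 0"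
    using fibres c by simp
  then have S_ne: "S \<noteq> {}"
    by auto
  have "S \<inter> {x. P (f x)} = (\<Union>b\<in>B. {x \<in> S. f x = b})"
    using P by blast
  also have "card \<dots> = (\<Sum>b\<in>B. card {x \<in> S. f x = b})"
    by (rule card_UN_disjoint) (use S B(1) in auto)
  also have "\<dots> = card B * c"
    using fibres by simp
  finally have "card (S \<inter> {x. P (f x)}) = card B * c" .
  then have total: "measure_pmf.prob (pmf_of_set S) {x. P (f x)} = card B * c / card S"
    by (simp add: measure_pmf_of_set[OF S_ne S])
  have single: "measure_pmf.prob (pmf_of_set S) {x. f x = b \<and> P (f x)} = c / card S"
    if "b \<in> B" for b
  proof -
    have "S \<inter> {x. f x = b \<and> P (f x)} = {x \<in> S. f x = b}"
      using P that by blast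
    then show ?thesis
      using fibres[OF that] by (simp add: measure_pmf_of_set[OF S_ne S])
  qed
  have "card S > 0" "card B > 0"
    using S S_ne B by (simp_all add: card_gt_0_iff)
  then show ?thesis
    using total single c by simp
qed

lemma finite_carrier_mat: "finite (carrier_mat n m :: 'a :: finite mat set)"
proof -
  have "carrier_mat n m \<subseteq> (\<lambda>f. Matrix.mat n m f) ` ({..<n} \<times> {..<m} \<rightarrow>\<^sub>E (UNIV :: 'a set))"
  proof
    fix A :: "'a mat"
    assume A: "A \<in> carrier_mat n m"
    let ?f = "restrict (\<lambda>ij. A $$ ij) ({..<n} \<times> {..<m})"
    have "?f \<in> {..<n} \<times> {..<m} \<rightarrow>\<^sub>E UNIV"
      by simp
    moreover have "A = Matrix.mat n m ?f"
      using A by (intro eq_matI) auto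
    ultimately show "A \<in> (\<lambda>f. Matrix.mat n m f) ` ({..<n} \<times> {..<m} \<rightarrow>\<^sub>E UNIV)"
      unfolding image_iff by blast
  qed
  then show ?thesis
    by (rule finite_subset) (intro finite_imageI finite_PiE, simp_all)
qed

lemma submatrix_UNIV [simp]: "submatrix A UNIV UNIV = A"
  unfolding submatrix_def pick_UNIV by (rule eq_matI) simp_all

lemma submatrix_transpose: "submatrix (transpose_mat A) I J = transpose_mat (submatrix A J I)"
  unfolding submatrix_def by (rule eq_matI) (auto simp: pick_le)

lemma submatrix_mult:
  fixes A :: "'a :: semiring_0 mat"
  assumes A: "A \<in> carrier_mat n m" and B: "B \<in> carrier_mat m k"
  shows "submatrix (A * B) I J = submatrix A I UNIV * submatrix B UNIV J"
proof (rule eq_matI)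
  fix i j
  assume "i < dim_row (submatrix A I UNIV * submatrix B UNIV J)"
    and "j < dim_col (submatrix A I UNIV * submatrix B UNIV J)"
  then have i: "i < card {i. i < n \<and> i \<in> I}" and j: "j < card {j. j < k \<and> j \<in> J}"
    using A B by (simp_all add: dim_submatrix)
  have "pick I i < n" "pick J j < k"
    using pick_le i j by auto
  then show "submatrix (A * B) I J $$ (i, j) = (submatrix A I UNIV * submatrix B UNIV J) $$ (i, j)"
    using A B i j by (simp add: dim_submatrix submatrix_index scalar_prod_def pick_UNIV)
qed (use A B in \<open>simp_all add: dim_submatrix\<close>)

lemma submatrix_carrier_mat:
  assumes "A \<in> carrier_mat m n"
  shows "submatrix A I J \<in> carrier_mat (card (I \<inter> {..<m})) (card (J \<inter> {..<n}))"
proof -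
  have "{i. i < dim_row A \<and> i \<in> I} = I \<inter> {..<m}" "{j. j < dim_col A \<and> j \<in> J} = J \<inter> {..<n}"
    using assms by fastforce+
  then show ?thesis
    by (intro carrier_matI) (simp_all only: dim_submatrix)
qed

lemma mult_inverse_cancel_right:
  fixes A :: "'a :: semiring_1 mat"
  assumes "A \<in> carrier_mat m n" "B \<in> carrier_mat n n" "C \<in> carrier_mat n n" "B * C = 1\<^sub>m n"
  shows "A * B * C = A"
  using assms by (simp add: assoc_mult_mat[of A m n B n C n] right_mult_one_mat[OF assms(1)])

lemma mult_eq_iff_eq_mult_inverse:
  fixes X A :: "'a :: semiring_1 mat"
  assumes X: "X \<in> carrier_mat m n" and A: "A \<in> carrier_mat k n"
    and V: "V \<in> carrier_mat n n" and W: "W \<in> carrier_mat n n" "V * W = 1\<^sub>m n" "W * V = 1\<^sub>m n"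
  shows "X * V = A \<longleftrightarrow> X = A * W"
proof
  assume "X * V = A"
  then show "X = A * W"
    using mult_inverse_cancel_right[OF X V W(1,2)] by simp
next
  assume "X = A * W"
  then show "X * V = A"
    using mult_inverse_cancel_right[OF A W(1) V W(3)] by simp
qed

lemma invertible_matI:
  assumes "A \<in> carrier_mat n n" "B \<in> carrier_mat n n" "A * B = 1\<^sub>m n" "B * A = 1\<^sub>m n"
  shows "invertible_mat A"
  using assms unfolding invertible_mat_def inverts_mat_def by auto

lemma invertible_matE:
  assumes "invertible_mat A" "A \<in> carrier_mat n n"
  obtains B where "B \<in> carrier_mat n n" "A * B = 1\<^sub>m n" "B * A = 1\<^sub>m n"
proof -
  obtain B where AB: "A * B = 1\<^sub>m n" and BA: "B * A = 1\<^sub>m (dim_row B)"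
    using assms unfolding invertible_mat_def inverts_mat_def by auto
  have "B \<in> carrier_mat n n"
    using arg_cong[OF AB, of dim_col] arg_cong[OF BA, of dim_col] assms(2) by auto
  with AB BA that show thesis
    by auto
qed

lemma invertible_mat_one [simp]: "invertible_mat (1\<^sub>m n)"
  by (rule invertible_matI[of _ n "1\<^sub>m n"]) simp_all

lemma invertible_mat_iff_det:
  fixes A :: "'a :: field mat"
  assumes A: "A \<in> carrier_mat n n"
  shows "invertible_mat A \<longleftrightarrow> Determinant.det A \<noteq> 0"
proof
  assume "invertible_mat A"
  then obtain B where "B \<in> carrier_mat n n" "A * B = 1\<^sub>m n"
    using A by (elim invertible_matE)
  then show "Determinant.det A \<noteq> 0"
    using det_mult[OF A, of B] by auto
next
  assume "Determinant.det A \<noteq> 0"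
  from det_non_zero_imp_unit[OF A this, of "()"]
  obtain B where "B \<in> carrier_mat n n" "B * A = 1\<^sub>m n" "A * B = 1\<^sub>m n"
    by (auto simp: Units_def ring_mat_def)
  then show "invertible_mat A"
    using A by (intro invertible_matI[of A n B])
qed

lemma invertible_mat_mult_iff:
  fixes A B :: "'a :: field mat"
  assumes A: "A \<in> carrier_mat n n" and B: "B \<in> carrier_mat n n"
  shows "invertible_mat (A * B) \<longleftrightarrow> invertible_mat A \<and> invertible_mat B"
  by (simp add: invertible_mat_iff_det[OF mult_carrier_mat[OF A B]] invertible_mat_iff_det[OF A]
      invertible_mat_iff_det[OF B] det_mult[OF A B])

lemma invertible_mat_mult_right_factor:
  fixes X V :: "'a :: field mat"
  assumes X: "X \<in> carrier_mat m n" and V: "V \<in> carrier_mat n n" and XV: "invertible_mat (X * V)"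
  shows "invertible_mat V"
proof -
  have "m = n"
    using XV X V by (simp add: invertible_mat_def square_mat.simps)
  then show ?thesis
    using XV invertible_mat_mult_iff[of X n V] X V by simp
qed

lemma (in vec_space) rank_mult_invertible_right:
  assumes A: "A \<in> carrier_mat n nc" and B: "B \<in> carrier_mat nc nc" "invertible_mat B"
  shows "rank (A * B) = rank A"
proof -
  obtain B' where B': "B' \<in> carrier_mat nc nc" "B * B' = 1\<^sub>m nc"
    using B by (elim invertible_matE)
  have "(\<exists>x\<in>carrier_vec nc. (A * B) *\<^sub>v x = y) \<longleftrightarrow> (\<exists>x\<in>carrier_vec nc. A *\<^sub>v x = y)" for y
  proof
    assume "\<exists>x\<in>carrier_vec nc. (A * B) *\<^sub>v x = y"
    then obtain x where "x \<in> carrier_vec nc" "(A * B) *\<^sub>v x = y" ..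
    then show "\<exists>x\<in>carrier_vec nc. A *\<^sub>v x = y"
      using A B by (intro bexI[of _ "B *\<^sub>v x"]) (simp_all add: assoc_mult_mat_vec)
  next
    assume "\<exists>x\<in>carrier_vec nc. A *\<^sub>v x = y"
    then obtain x where x: "x \<in> carrier_vec nc" "A *\<^sub>v x = y" ..
    have "B *\<^sub>v (B' *\<^sub>v x) = (B * B') *\<^sub>v x"
      by (rule assoc_mult_mat_vec[OF B(1) B'(1) x(1), symmetric])
    also have "\<dots> = x"
      using B'(2) x(1) by simp
    finally have "(A * B) *\<^sub>v (B' *\<^sub>v x) = y"
      using A B B' x by simp
    then show "\<exists>x\<in>carrier_vec nc. (A * B) *\<^sub>v x = y"
      using B' x by (intro bexI[of _ "B' *\<^sub>v x"]) simp_all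
  qed
  then have "col_space (A * B) = col_space A"
    unfolding col_space_eq[OF A] col_space_eq[OF mult_carrier_mat[OF A B(1)]] using A B by simp
  then show ?thesis
    unfolding rank_def col_space_def[symmetric] by simp
qed

definition selection_mat :: "nat \<Rightarrow> nat \<Rightarrow> nat set \<Rightarrow> 'a :: {zero, one} mat" where
  "selection_mat n r I = Matrix.mat n r (\<lambda>(i, j). if i = pick I j then 1 else 0)"

lemma submatrix_selection_mat:
  assumes "I \<subseteq> {..<n}" "card I = r"
  shows "submatrix (selection_mat n r I) I UNIV = 1\<^sub>m r"
proof -
  have I: "card {i. i < n \<and> i \<in> I} = r"
    using assms by (auto intro!: arg_cong[where f = card])
  show ?thesis
  proof (rule eq_matI)
    fix i j
    assume "i < dim_row (1\<^sub>m r :: 'a mat)" "j < dim_col (1\<^sub>m r :: 'a mat)"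
    then have ij: "i < r" "j < r"
      by simp_all
    have "pick I i < n"
      using pick_in_set[of i I] assms ij by auto
    moreover have "pick I i = pick I j \<longleftrightarrow> i = j"
      using card_pick[of i I] card_pick[of j I] assms(2) ij by metis
    ultimately show "submatrix (selection_mat n r I) I UNIV $$ (i, j) = 1\<^sub>m r $$ (i, j)"
      using ij assms(2) by (simp add: submatrix_index I selection_mat_def pick_UNIV)
  qed (simp_all add: dim_submatrix I selection_mat_def assms(2))
qed

lemma rank_selection_mat:
  assumes "I \<subseteq> {..<n}" "card I = r"
  shows "vec_space.rank n (selection_mat n r I :: 'a :: field mat) = r"
proof -
  have E: "(selection_mat n r I :: 'a mat) \<in> carrier_mat n r"
    by (simp add: selection_mat_def)
  have "r \<le> vec_space.rank n (selection_mat n r I :: 'a mat)"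
    using vec_space.rank_gt_minor[OF E, of I UNIV] by (simp add: submatrix_selection_mat[OF assms])
  then show ?thesis
    using vec_space.rank_le_nc[OF E] by simp
qed

instance bit :: finite
  by standard (simp add: type_definition.univ[OF type_definition_bit])

lemma finite_full_col_rank_mats: "finite (full_col_rank_mats s r)"
  unfolding full_col_rank_mats_def by (rule finite_subset[OF _ finite_carrier_mat[of s r]]) auto

lemma finite_full_row_rank_mats: "finite (full_row_rank_mats r s)"
  unfolding full_row_rank_mats_def by (rule finite_subset[OF _ finite_carrier_mat[of r s]]) auto

lemma finite_invertible_mats: "finite (invertible_mats r)"
  unfolding invertible_mats_def by (rule finite_subset[OF _ finite_carrier_mat[of r r]]) auto

lemma invertible_mats_nonempty: "invertible_mats r \<noteq> {}"
  using invertible_mat_one one_carrier_mat unfolding invertible_mats_def by blast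

lemma full_col_rank_mats_carrier: "Z \<in> full_col_rank_mats s r \<Longrightarrow> Z \<in> carrier_mat s r"
  by (simp add: full_col_rank_mats_def)

lemma full_row_rank_mats_carrier: "U \<in> full_row_rank_mats r s \<Longrightarrow> U \<in> carrier_mat r s"
  by (simp add: full_row_rank_mats_def)

lemma mult_invertible_mem_full_col_rank_mats:
  assumes "Z \<in> full_col_rank_mats s r" "G \<in> carrier_mat r r" "invertible_mat G"
  shows "Z * G \<in> full_col_rank_mats s r"
  using assms vec_space.rank_mult_invertible_right unfolding full_col_rank_mats_def by auto

lemma submatrix_mult_carrier_mat:
  assumes "Z \<in> full_col_rank_mats s r" "U \<in> full_row_rank_mats r s"
    and "I \<subseteq> {..<s}" "card I = r" "J \<subseteq> {..<s}" "card J = r"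
  shows "submatrix (Z * U) I J \<in> carrier_mat r r"
  using submatrix_carrier_mat[OF mult_carrier_mat, OF full_col_rank_mats_carrier[OF assms(1)]
      full_row_rank_mats_carrier[OF assms(2)], of I J]
  unfolding Int_absorb2[OF assms(3)] Int_absorb2[OF assms(5)] assms(4,6) .

abbreviation full_col_rank_fibre :: "nat \<Rightarrow> nat \<Rightarrow> nat set \<Rightarrow> bit mat \<Rightarrow> bit mat set" where
  "full_col_rank_fibre s r I X \<equiv> {Z \<in> full_col_rank_mats s r. submatrix Z I UNIV = X}"

lemma bij_betw_mult_invertible_full_col_rank_fibre:
  assumes G: "G \<in> carrier_mat r r" "invertible_mat G" and X: "X \<in> carrier_mat k r"
  shows "bij_betw (\<lambda>Z. Z * G) (full_col_rank_fibre s r I X) (full_col_rank_fibre s r I (X * G))"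
proof -
  obtain H where H: "H \<in> carrier_mat r r" "G * H = 1\<^sub>m r" "H * G = 1\<^sub>m r"
    using G by (elim invertible_matE)
  have maps: "Z * K \<in> full_col_rank_fibre s r I (W * K)"
    if Z: "Z \<in> full_col_rank_fibre s r I W" and K: "K \<in> carrier_mat r r" "invertible_mat K"
    for Z W K
  proof -
    have "submatrix (Z * K) I UNIV = W * K"
      using submatrix_mult[OF full_col_rank_mats_carrier K(1), of Z s I UNIV] Z by simp
    then show ?thesis
      using mult_invertible_mem_full_col_rank_mats Z K by blast
  qed
  show ?thesis
  proof (rule bij_betw_byWitness[where f' = "\<lambda>Z. Z * H"])
    show "\<forall>Z\<in>full_col_rank_fibre s r I X. Z * G * H = Z"
      using mult_inverse_cancel_right[OF full_col_rank_mats_carrier G(1) H(1,2)] by blast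
    show "\<forall>Z\<in>full_col_rank_fibre s r I (X * G). Z * H * G = Z"
      using mult_inverse_cancel_right[OF full_col_rank_mats_carrier H(1) G(1) H(3)] by blast
    show "(\<lambda>Z. Z * G) ` full_col_rank_fibre s r I X \<subseteq> full_col_rank_fibre s r I (X * G)"
      using maps G by blast
    have "X * G * H = X"
      using mult_inverse_cancel_right[OF X G(1) H(1,2)] .
    then show "(\<lambda>Z. Z * H) ` full_col_rank_fibre s r I (X * G) \<subseteq> full_col_rank_fibre s r I X"
      using maps[of _ "X * G" H] H invertible_matI[OF H(1) G(1) H(3) H(2)] by auto
  qed
qed

lemma card_full_col_rank_fibre_invertible:
  assumes "X \<in> carrier_mat r r" "invertible_mat X"
  shows "card (full_col_rank_fibre s r I X) = card (full_col_rank_fibre s r I (1\<^sub>m r))"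
  using bij_betw_same_card[OF bij_betw_mult_invertible_full_col_rank_fibre[OF assms one_carrier_mat]]
    assms by simp

lemma card_full_col_rank_fibre_one_pos:
  assumes "I \<subseteq> {..<s}" "card I = r"
  shows "card (full_col_rank_fibre s r I (1\<^sub>m r)) > 0"
proof -
  have "selection_mat s r I \<in> full_col_rank_fibre s r I (1\<^sub>m r)"
    by (simp add: full_col_rank_mats_def rank_selection_mat[OF assms] submatrix_selection_mat[OF assms])
      (simp add: selection_mat_def)
  then show ?thesis
    using finite_full_col_rank_mats by (auto simp: card_gt_0_iff)
qed

lemma card_full_row_rank_invertible_submatrix_pos:
  assumes "J \<subseteq> {..<s}" "card J = r"
  shows "card {U \<in> full_row_rank_mats r s. invertible_mat (submatrix U UNIV J)} > 0"
proof -
  have "transpose_mat (selection_mat s r J)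
      \<in> {U \<in> full_row_rank_mats r s. invertible_mat (submatrix U UNIV J)}"
    by (simp add: full_row_rank_mats_def rank_selection_mat[OF assms] submatrix_transpose
        submatrix_selection_mat[OF assms]) (simp add: selection_mat_def)
  then show ?thesis
    using finite_full_row_rank_mats by (auto simp: card_gt_0_iff)
qed

lemma card_full_col_rank_product_fibre:
  assumes V: "V \<in> carrier_mat r r" and A: "A \<in> carrier_mat r r" "invertible_mat A"
  shows "card {Z \<in> full_col_rank_mats s r. submatrix Z I UNIV * V = A}
    = (if invertible_mat V then card (full_col_rank_fibre s r I (1\<^sub>m r)) else 0)"
proof -
  have ZI: "submatrix Z I UNIV \<in> carrier_mat (card (I \<inter> {..<s})) r"
    if "Z \<in> full_col_rank_mats s r" for Z
    using submatrix_carrier_mat[OF full_col_rank_mats_carrier[OF that], of I UNIV] by simp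
  show ?thesis
  proof (cases "invertible_mat V")
    case True
    then obtain W where W: "W \<in> carrier_mat r r" "V * W = 1\<^sub>m r" "W * V = 1\<^sub>m r"
      using V by (elim invertible_matE)
    have "{Z \<in> full_col_rank_mats s r. submatrix Z I UNIV * V = A} = full_col_rank_fibre s r I (A * W)"
      using mult_eq_iff_eq_mult_inverse[OF ZI A(1) V W] by blast
    moreover have "invertible_mat (A * W)"
      using invertible_mat_mult_iff[OF A(1) W(1)] invertible_matI[OF W(1) V W(3) W(2)] A(2) by simp
    ultimately show ?thesis
      using True card_full_col_rank_fibre_invertible[of "A * W" r s I] A W by simp
  next
    case False
    have "{Z \<in> full_col_rank_mats s r. submatrix Z I UNIV * V = A} = {}"
      using invertible_mat_mult_right_factor[OF ZI V] A(2) False by blast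
    then have "card {Z \<in> full_col_rank_mats s r. submatrix Z I UNIV * V = A} = 0"
      by (simp only: card.empty)
    with False show ?thesis
      by simp
  qed
qed

lemma card_mask_fibre:
  assumes J: "J \<subseteq> {..<s}" "card J = r" and A: "A \<in> invertible_mats r"
  shows "card {(Z, U) \<in> full_col_rank_mats s r \<times> full_row_rank_mats r s. submatrix (Z * U) I J = A}
    = card {U \<in> full_row_rank_mats r s. invertible_mat (submatrix U UNIV J)}
      * card (full_col_rank_fibre s r I (1\<^sub>m r))"
proof -
  let ?Zs = "full_col_rank_mats s r" and ?Us = "full_row_rank_mats r s"
  let ?k = "card (full_col_rank_fibre s r I (1\<^sub>m r))"
  have A: "A \<in> carrier_mat r r" "invertible_mat A"
    using A by (simp_all add: invertible_mats_def)
  have fibre_U: "card {Z \<in> ?Zs. submatrix (Z * U) I J = A}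
      = (if invertible_mat (submatrix U UNIV J) then ?k else 0)" if "U \<in> ?Us" for U
  proof -
    note U = full_row_rank_mats_carrier[OF that]
    have "submatrix U UNIV J \<in> carrier_mat r r"
      using submatrix_carrier_mat[OF U, of UNIV J] J by (simp add: Int_absorb2)
    note product_fibre = card_full_col_rank_product_fibre[OF this A, of s I]
    have "submatrix (Z * U) I J = submatrix Z I UNIV * submatrix U UNIV J" if "Z \<in> ?Zs" for Z
      using submatrix_mult[OF full_col_rank_mats_carrier[OF that] U] .
    then have "{Z \<in> ?Zs. submatrix (Z * U) I J = A}
        = {Z \<in> ?Zs. submatrix Z I UNIV * submatrix U UNIV J = A}"
      by (simp cong: conj_cong)
    then show ?thesis
      using product_fibre by simp
  qed
  have "{(Z, U) \<in> ?Zs \<times> ?Us. submatrix (Z * U) I J = A}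
      = prod.swap ` (SIGMA U:?Us. {Z \<in> ?Zs. submatrix (Z * U) I J = A})"
    by force
  then have "card {(Z, U) \<in> ?Zs \<times> ?Us. submatrix (Z * U) I J = A}
      = card (SIGMA U:?Us. {Z \<in> ?Zs. submatrix (Z * U) I J = A})"
    by (simp only: card_image[OF inj_swap])
  also have "\<dots> = (\<Sum>U\<in>?Us. card {Z \<in> ?Zs. submatrix (Z * U) I J = A})"
    by (rule card_SigmaI) (simp_all add: finite_full_row_rank_mats finite_full_col_rank_mats)
  also have "\<dots> = (\<Sum>U\<in>?Us. if invertible_mat (submatrix U UNIV J) then ?k else 0)"
    using fibre_U by (rule sum.cong[OF refl])
  also have "\<dots> = card {U \<in> ?Us. invertible_mat (submatrix U UNIV J)} * ?k"
    by (simp add: sum.inter_filter[symmetric] finite_full_row_rank_mats)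
  finally show ?thesis .
qed

theorem theorem2:
  fixes s r :: nat and I J :: "nat set"
  assumes "1 \<le> r" and "r < s"
    and "I \<subseteq> {..<s}" and "card I = r"
    and "J \<subseteq> {..<s}" and "card J = r"
  shows "measure_pmf.prob (ZU_pmf s r)
           {(Z, U). invertible_mat (submatrix (Z * U) I J)} > 0
       \<and> (\<forall>A \<in> invertible_mats r.
           measure_pmf.prob (ZU_pmf s r)
             {(Z, U). submatrix (Z * U) I J = A \<and> invertible_mat (submatrix (Z * U) I J)}
           / measure_pmf.prob (ZU_pmf s r)
             {(Z, U). invertible_mat (submatrix (Z * U) I J)}
           = 1 / real (card (invertible_mats r)))"
proof -
  note I = assms(3,4) and J = assms(5,6)
  let ?S = "full_col_rank_mats s r \<times> full_row_rank_mats r s"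
  let ?mask = "\<lambda>(Z, U). submatrix (Z * U) I J"
  let ?c = "card {U \<in> full_row_rank_mats r s. invertible_mat (submatrix U UNIV J)}
    * card (full_col_rank_fibre s r I (1\<^sub>m r))"
  have mask_invertible_iff: "invertible_mat (?mask x) \<longleftrightarrow> ?mask x \<in> invertible_mats r"
    if "x \<in> ?S" for x
    using that submatrix_mult_carrier_mat[OF _ _ I J] by (cases x) (simp add: invertible_mats_def)
  have fibres: "card {x \<in> ?S. ?mask x = A} = ?c" if "A \<in> invertible_mats r" for A
  proof -
    have "{x \<in> ?S. ?mask x = A} = {(Z, U) \<in> ?S. submatrix (Z * U) I J = A}"
      by auto
    with card_mask_fibre[OF J that, of I] show ?thesis
      by (simp only:)
  qed
  have "?c > 0"
    using card_full_row_rank_invertible_submatrix_pos[OF J] card_full_col_rank_fibre_one_pos[OF I]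
    by simp
  from pmf_of_set_conditional_uniform[where f = ?mask and P = invertible_mat,
      OF finite_cartesian_product[OF finite_full_col_rank_mats finite_full_row_rank_mats]
      finite_invertible_mats invertible_mats_nonempty mask_invertible_iff fibres this]
  show ?thesis
    unfolding ZU_pmf_def case_prod_unfold .
qed

end
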